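(* Let $\alpha,\beta>0$ and $\tau>0$ with $\tau^\alpha<1$. If $A\in\mathcal B(X)$ is a bounded operator on a Banach space $X$ with $\|A\|<1$, then for each $n\in\mathbb N_0$ the series $\sum_{j=0}^\infty k_\tau^{\alpha j+\beta}(n)A^j$ converges in operator norm, and $A$ generates the discrete $(\alpha,\beta)$-resolvent family $\{S_{\alpha,\beta}^n\}_{n\in\mathbb{N}_0}$ given by $$S_{\alpha,\beta}^n=\sum_{j=0}^\infty k_\tau^{\alpha j+\beta}(n)A^j,\qquad n\in\mathbb N_0.$$
   Context: For $\gamma>0$ and $n\in\mathbb{N}_0$ let $k_\tau^\gamma(n):=\frac{\tau^{\gamma-1}\Gamma(\gamma+n)}{\Gamma(\gamma)\Gamma(n+1)}$. For $\alpha,\beta>0$, a sequence $\{S_{\alpha,\beta}^n\}_{n\in\mathbb{N}_0}\subset\mathcal{B}(X)$ is called a discrete $(\alpha,\beta)$-resolvent family generated by the closed operator $A:D(A)\subset X\to X$ if (1) $S^n_{\alpha,\beta}x\in D(A)$ for all $x\in X$, $n\in\mathbb N_0$, and $AS_{\alpha,\beta}^nx=S_{\alpha,\beta}^nAx$ for all $x\in D(A)$, $n\in\mathbb{N}_0$; (2) for every $x\in X$ and $n\in\mathbb{N}_0$, $S_{\alpha,\beta}^nx=k^\beta_\tau(n)x+\tau A\sum_{j=0}^n k^\alpha_\tau(n-j)S_{\alpha,\beta}^jx$. *)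

theory Defs
  imports "HOL-Analysis.Analysis"
begin

definition kt :: "real \<Rightarrow> real \<Rightarrow> nat \<Rightarrow> real" where
  "kt \<tau> \<gamma> n = \<tau> powr (\<gamma> - 1) * Gamma (\<gamma> + real n) / (Gamma \<gamma> * Gamma (real n + 1))"

definition blinfun_pow :: "('a::real_normed_vector \<Rightarrow>\<^sub>L 'a) \<Rightarrow> nat \<Rightarrow> ('a \<Rightarrow>\<^sub>L 'a)" where
  "blinfun_pow A j = ((\<lambda>B. A o\<^sub>L B) ^^ j) id_blinfun"

definition closed_operator :: "'a::real_normed_vector set \<Rightarrow> ('a \<Rightarrow> 'a) \<Rightarrow> bool" where
  "closed_operator D A \<longleftrightarrow> subspace D
     \<and> (\<forall>x\<in>D. \<forall>y\<in>D. A (x + y) = A x + A y)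
     \<and> (\<forall>x\<in>D. \<forall>c::real. A (c *\<^sub>R x) = c *\<^sub>R A x)
     \<and> closed {(x, A x) | x. x \<in> D}"

definition discrete_resolvent_family ::
  "real \<Rightarrow> real \<Rightarrow> real \<Rightarrow> 'a::real_normed_vector set \<Rightarrow> ('a \<Rightarrow> 'a) \<Rightarrow> (nat \<Rightarrow> ('a \<Rightarrow>\<^sub>L 'a)) \<Rightarrow> bool" where
  "discrete_resolvent_family \<tau> \<alpha> \<beta> D A S \<longleftrightarrow>
     closed_operator D A
     \<and> (\<forall>n x. S n x \<in> D)
     \<and> (\<forall>n. \<forall>x\<in>D. A (S n x) = S n (A x))
     \<and> (\<forall>n x. (\<Sum>j\<le>n. kt \<tau> \<alpha> (n - j) *\<^sub>R S j x) \<in> D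
              \<and> S n x = kt \<tau> \<beta> n *\<^sub>R x + \<tau> *\<^sub>R A (\<Sum>j\<le>n. kt \<tau> \<alpha> (n - j) *\<^sub>R S j x))"

end

theory Submission
  imports Defs
begin

text \<open>
  In terms of the rising factorial, k(gamma, n) = tau^(gamma - 1) pochhammer(gamma, n) / n!, so the
  Vandermonde identity for rising factorials becomes the semigroup law
  tau * (k(a) conv k(b)) = k(a + b) of the kernels under discrete convolution. Convolving
  S(n) = sum_j k(alpha j + beta, n) A^j with tau k(alpha) therefore raises every exponent
  alpha j + beta to alpha (j + 1) + beta, and one further factor A shifts the series back to S(n)
  minus its j = 0 term k(beta, n) I: this is the resolvent equation. The series converge since
  pochhammer(g, n) / n! <= exp (eps (g + n)) / eps^n for every eps > 0; with eps = - ln tau / 2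
  the coefficients are dominated by a multiple of (tau^(alpha/2))^j, while norm (A^j) <= 1.
\<close>

lemma pochhammer_add_div_fact:
  fixes a b :: "'a::field_char_0"
  shows "pochhammer (a + b) n / fact n
    = (\<Sum>k\<le>n. pochhammer a k / fact k * (pochhammer b (n - k) / fact (n - k)))"
proof -
  have "pochhammer (a + b) n / fact n
      = (\<Sum>k\<le>n. of_nat (n choose k) * pochhammer a k * pochhammer b (n - k) / fact n)"
    by (simp add: pochhammer_binomial_sum sum_divide_distrib)
  also have "\<dots> = (\<Sum>k\<le>n. pochhammer a k / fact k * (pochhammer b (n - k) / fact (n - k)))"
    by (intro sum.cong refl) (simp add: binomial_fact)
  finally show ?thesis .
qed

lemma kt_eq_pochhammer:
  assumes "\<gamma> > 0"
  shows "kt \<tau> \<gamma> n = \<tau> powr (\<gamma> - 1) * pochhammer \<gamma> n / fact n"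
proof -
  have "\<gamma> \<notin> \<int>\<^sub>\<le>\<^sub>0" using assms by (auto elim!: nonpos_Ints_cases)
  then have "pochhammer \<gamma> n = Gamma (\<gamma> + real n) / Gamma \<gamma>" by (simp add: pochhammer_Gamma)
  moreover have "Gamma (real n + 1) = fact n" using Gamma_fact[of n] by (simp add: add.commute)
  moreover have "Gamma \<gamma> > 0" using assms by (rule Gamma_real_pos)
  ultimately show ?thesis unfolding kt_def by (simp add: field_simps)
qed

lemma kt_nonneg:
  assumes "\<tau> > 0" "\<gamma> > 0"
  shows "kt \<tau> \<gamma> n \<ge> 0"
  using assms by (simp add: kt_eq_pochhammer pochhammer_nonneg)

lemma kt_convolution:
  assumes "\<tau> > 0" "a > 0" "b > 0"
  shows "\<tau> * (\<Sum>k\<le>n. kt \<tau> a k * kt \<tau> b (n - k)) = kt \<tau> (a + b) n"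
proof -
  have "\<tau> * (\<Sum>k\<le>n. kt \<tau> a k * kt \<tau> b (n - k)) = \<tau> * (\<tau> powr (a - 1) * \<tau> powr (b - 1))
      * (\<Sum>k\<le>n. pochhammer a k / fact k * (pochhammer b (n - k) / fact (n - k)))"
    using assms by (simp add: kt_eq_pochhammer sum_distrib_left mult_ac)
  also have "\<tau> * (\<tau> powr (a - 1) * \<tau> powr (b - 1)) = \<tau> powr (1 + (a - 1) + (b - 1))"
    using assms(1) by (simp only: powr_add) simp
  also have "(\<Sum>k\<le>n. pochhammer a k / fact k * (pochhammer b (n - k) / fact (n - k)))
      = pochhammer (a + b) n / fact n"
    by (rule pochhammer_add_div_fact[symmetric])
  also have "\<tau> powr (1 + (a - 1) + (b - 1)) * (pochhammer (a + b) n / fact n) = kt \<tau> (a + b) n"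
    using assms by (simp add: kt_eq_pochhammer algebra_simps)
  finally show ?thesis .
qed

lemma power_div_fact_le_exp:
  fixes x :: real
  assumes "x \<ge> 0"
  shows "x ^ n / fact n \<le> exp x"
proof -
  have "summable (\<lambda>k. x ^ k / fact k)"
    using summable_exp_generic[of x] by (simp add: divide_inverse ac_simps)
  moreover have "exp x = (\<Sum>k. x ^ k / fact k)"
    by (simp add: exp_def divide_inverse ac_simps)
  ultimately show ?thesis
    using sum_le_suminf[of "\<lambda>k. x ^ k / fact k" "{n}"] assms by auto
qed

lemma pochhammer_le_power:
  fixes g :: real
  assumes "g \<ge> 0"
  shows "pochhammer g n \<le> (g + real n) ^ n"
proof -
  have "pochhammer g n = (\<Prod>i<n. g + real i)" by (simp add: pochhammer_prod atLeast0LessThan)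
  also have "\<dots> \<le> (\<Prod>i<n. g + real n)" by (rule prod_mono) (use assms in auto)
  finally show ?thesis by simp
qed

lemma pochhammer_div_fact_le_exp:
  fixes g \<epsilon> :: real
  assumes "g \<ge> 0" "\<epsilon> > 0"
  shows "pochhammer g n / fact n \<le> exp (\<epsilon> * (g + real n)) / \<epsilon> ^ n"
proof -
  have "\<epsilon> ^ n * pochhammer g n \<le> (\<epsilon> * (g + real n)) ^ n"
    unfolding power_mult_distrib using assms pochhammer_le_power[of g n]
    by (simp add: mult_left_mono)
  also have "\<dots> \<le> exp (\<epsilon> * (g + real n)) * fact n"
    using power_div_fact_le_exp[of "\<epsilon> * (g + real n)" n] assms by (simp add: divide_le_eq)
  finally show ?thesis
    using assms by (simp add: field_simps)
qed

lemma kt_le_geometric: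
  assumes "\<alpha> > 0" "\<beta> > 0" "\<tau> > 0" "\<tau> powr \<alpha> < 1"
  obtains C q where "0 \<le> q" "q < 1" "\<And>j. kt \<tau> (\<alpha> * real j + \<beta>) n \<le> C * q ^ j"
proof -
  define L where "L = ln \<tau>"
  have "L < 0"
    using assms by (simp add: powr_def L_def mult_less_0_iff)
  define \<epsilon> where "\<epsilon> = - L / 2"
  define q where "q = exp (\<alpha> * L / 2)"
  define C where "C = exp ((\<beta> - 1) * L + \<epsilon> * (\<beta> + real n)) / \<epsilon> ^ n"
  have "kt \<tau> (\<alpha> * real j + \<beta>) n \<le> C * q ^ j" for j
  proof -
    define g where "g = \<alpha> * real j + \<beta>"
    have "g > 0" "\<epsilon> > 0" using assms \<open>L < 0\<close> by (simp_all add: g_def \<epsilon>_def add_nonneg_pos)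
    have "kt \<tau> g n = exp ((g - 1) * L) * (pochhammer g n / fact n)"
      using kt_eq_pochhammer[OF \<open>g > 0\<close>] assms by (simp add: powr_def L_def)
    also have "\<dots> \<le> exp ((g - 1) * L) * (exp (\<epsilon> * (g + real n)) / \<epsilon> ^ n)"
      by (rule mult_left_mono[OF pochhammer_div_fact_le_exp]) (use \<open>g > 0\<close> \<open>\<epsilon> > 0\<close> in auto)
    also have "\<dots> = exp ((g - 1) * L + \<epsilon> * (g + real n)) / \<epsilon> ^ n"
      by (simp add: exp_add)
    also have "(g - 1) * L + \<epsilon> * (g + real n)
        = ((\<beta> - 1) * L + \<epsilon> * (\<beta> + real n)) + real j * (\<alpha> * L / 2)"
      by (simp add: g_def \<epsilon>_def field_simps)
    also have "exp \<dots> = exp ((\<beta> - 1) * L + \<epsilon> * (\<beta> + real n)) * q ^ j"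
      by (simp only: exp_add q_def exp_of_nat_mult[symmetric])
    finally show ?thesis
      by (simp add: g_def C_def)
  qed
  moreover have "0 \<le> q" "q < 1"
    using \<open>L < 0\<close> assms(1) by (simp_all add: q_def mult_pos_neg)
  ultimately show thesis using that by blast
qed

lemma summable_kt:
  assumes "\<alpha> > 0" "\<beta> > 0" "\<tau> > 0" "\<tau> powr \<alpha> < 1"
  shows "summable (\<lambda>j. kt \<tau> (\<alpha> * real j + \<beta>) n)"
proof -
  obtain C q where "0 \<le> q" "q < 1" and bound: "\<And>j. kt \<tau> (\<alpha> * real j + \<beta>) n \<le> C * q ^ j"
    using kt_le_geometric assms by metis
  then have "norm q < 1" by simp
  show ?thesis
    by (rule summable_comparison_test'[OF summable_mult[OF summable_geometric[OF \<open>norm q < 1\<close>]]])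
      (use bound kt_nonneg assms in \<open>auto simp: add_nonneg_pos\<close>)
qed

lemma blinfun_pow_0 [simp]: "blinfun_pow A 0 = id_blinfun"
  by (simp add: blinfun_pow_def)

lemma blinfun_pow_Suc [simp]: "blinfun_pow A (Suc j) = A o\<^sub>L blinfun_pow A j"
  by (simp add: blinfun_pow_def)

lemma norm_blinfun_pow_le: "norm (blinfun_pow A j) \<le> norm A ^ j"
proof (induction j)
  case 0
  then show ?case by (simp add: norm_blinfun_id_le)
next
  case (Suc j)
  have "norm (A o\<^sub>L blinfun_pow A j) \<le> norm A * norm (blinfun_pow A j)"
    by (rule norm_blinfun_compose)
  also have "\<dots> \<le> norm A * norm A ^ j"
    using Suc by (simp add: mult_left_mono)
  finally show ?case by simp
qed

lemma blinfun_pow_commute: "A o\<^sub>L blinfun_pow A j = blinfun_pow A j o\<^sub>L A"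
proof (induction j)
  case 0
  then show ?case by (auto intro!: blinfun_eqI)
next
  case (Suc j)
  have "blinfun_pow A (Suc j) o\<^sub>L A = A o\<^sub>L (blinfun_pow A j o\<^sub>L A)"
    by (auto intro!: blinfun_eqI)
  then show ?case by (simp add: Suc)
qed

lemmas bounded_linear_blinfun_compose_left =
    bounded_bilinear.bounded_linear_left[OF bounded_bilinear_blinfun_compose]
  and bounded_linear_blinfun_compose_right =
    bounded_bilinear.bounded_linear_right[OF bounded_bilinear_blinfun_compose]
  and blinfun_compose_scaleR_left = bounded_bilinear.scaleR_left[OF bounded_bilinear_blinfun_compose]
  and blinfun_compose_scaleR_right = bounded_bilinear.scaleR_right[OF bounded_bilinear_blinfun_compose]

lemma blinfun_compose_suminf_pow_commute:
  fixes A :: "'a::real_normed_vector \<Rightarrow>\<^sub>L 'a"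
  assumes "summable (\<lambda>j. c j *\<^sub>R blinfun_pow A j)"
  shows "A o\<^sub>L (\<Sum>j. c j *\<^sub>R blinfun_pow A j) = (\<Sum>j. c j *\<^sub>R blinfun_pow A j) o\<^sub>L A"
proof -
  have "A o\<^sub>L (\<Sum>j. c j *\<^sub>R blinfun_pow A j) = (\<Sum>j. A o\<^sub>L (c j *\<^sub>R blinfun_pow A j))"
    by (rule bounded_linear.suminf[OF bounded_linear_blinfun_compose_right assms])
  also have "\<dots> = (\<Sum>j. (c j *\<^sub>R blinfun_pow A j) o\<^sub>L A)"
    by (simp add: blinfun_pow_commute blinfun_compose_scaleR_left blinfun_compose_scaleR_right)
  also have "\<dots> = (\<Sum>j. c j *\<^sub>R blinfun_pow A j) o\<^sub>L A"
    by (rule bounded_linear.suminf[OF bounded_linear_blinfun_compose_left assms, symmetric])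
  finally show ?thesis .
qed

definition resolvent_series ::
    "real \<Rightarrow> real \<Rightarrow> real \<Rightarrow> ('a::real_normed_vector \<Rightarrow>\<^sub>L 'a) \<Rightarrow> nat \<Rightarrow> ('a \<Rightarrow>\<^sub>L 'a)"
  where "resolvent_series \<tau> \<alpha> \<beta> A n = (\<Sum>j. kt \<tau> (\<alpha> * real j + \<beta>) n *\<^sub>R blinfun_pow A j)"

context
  fixes \<alpha> \<tau> :: real and A :: "'a::banach \<Rightarrow>\<^sub>L 'a"
  assumes \<alpha>: "\<alpha> > 0" and \<tau>: "\<tau> > 0" "\<tau> powr \<alpha> < 1" and A: "norm A \<le> 1"
begin

lemma summable_kt_scaleR_blinfun_pow:
  assumes "\<beta> > 0"
  shows "summable (\<lambda>j. kt \<tau> (\<alpha> * real j + \<beta>) n *\<^sub>R blinfun_pow A j)"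
proof (rule summable_comparison_test'[OF summable_kt[OF \<alpha> assms \<tau>]])
  fix j
  have "kt \<tau> (\<alpha> * real j + \<beta>) n \<ge> 0"
    using \<alpha> \<tau> assms by (simp add: kt_nonneg add_nonneg_pos)
  moreover have "norm (blinfun_pow A j) \<le> 1"
    using order_trans[OF norm_blinfun_pow_le power_le_one[OF norm_ge_zero A]] .
  ultimately show "norm (kt \<tau> (\<alpha> * real j + \<beta>) n *\<^sub>R blinfun_pow A j) \<le> kt \<tau> (\<alpha> * real j + \<beta>) n"
    by (simp add: mult_left_le)
qed

lemma resolvent_series_split_head:
  assumes "\<beta> > 0"
  shows "resolvent_series \<tau> \<alpha> \<beta> A n
    = kt \<tau> \<beta> n *\<^sub>R id_blinfun + (A o\<^sub>L resolvent_series \<tau> \<alpha> (\<alpha> + \<beta>) A n)"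
proof -
  have summable_shifted: "summable (\<lambda>j. kt \<tau> (\<alpha> * real j + (\<alpha> + \<beta>)) n *\<^sub>R blinfun_pow A j)"
    using \<alpha> assms by (intro summable_kt_scaleR_blinfun_pow) simp
  have "A o\<^sub>L resolvent_series \<tau> \<alpha> (\<alpha> + \<beta>) A n
      = (\<Sum>j. A o\<^sub>L (kt \<tau> (\<alpha> * real j + (\<alpha> + \<beta>)) n *\<^sub>R blinfun_pow A j))"
    unfolding resolvent_series_def
    by (rule bounded_linear.suminf[OF bounded_linear_blinfun_compose_right summable_shifted])
  also have "\<dots> = (\<Sum>j. kt \<tau> (\<alpha> * real (Suc j) + \<beta>) n *\<^sub>R blinfun_pow A (Suc j))"
    by (simp add: blinfun_compose_scaleR_right algebra_simps)
  also have "\<dots> = resolvent_series \<tau> \<alpha> \<beta> A n - kt \<tau> \<beta> n *\<^sub>R id_blinfun"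
    unfolding resolvent_series_def
    by (subst suminf_split_head[OF summable_kt_scaleR_blinfun_pow[OF assms]]) simp
  finally show ?thesis by (simp add: algebra_simps)
qed

lemma resolvent_series_convolution:
  assumes "\<beta> > 0"
  shows "(\<Sum>i\<le>n. kt \<tau> \<alpha> (n - i) *\<^sub>R resolvent_series \<tau> \<alpha> \<beta> A i)
    = (1 / \<tau>) *\<^sub>R resolvent_series \<tau> \<alpha> (\<alpha> + \<beta>) A n"
proof -
  have coefficient: "(\<Sum>i\<le>n. kt \<tau> \<alpha> (n - i) * kt \<tau> (\<alpha> * real j + \<beta>) i)
      = kt \<tau> (\<alpha> * real j + (\<alpha> + \<beta>)) n / \<tau>" for j
  proof -
    have "\<tau> * (\<Sum>i\<le>n. kt \<tau> (\<alpha> * real j + \<beta>) i * kt \<tau> \<alpha> (n - i)) = kt \<tau> (\<alpha> * real j + \<beta> + \<alpha>) n"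
      using \<alpha> \<tau> assms by (intro kt_convolution) (simp_all add: add_nonneg_pos)
    then show ?thesis
      using \<tau> by (simp add: field_simps mult.commute add.commute add.left_commute)
  qed
  have "(\<Sum>i\<le>n. kt \<tau> \<alpha> (n - i) *\<^sub>R resolvent_series \<tau> \<alpha> \<beta> A i)
      = (\<Sum>i\<le>n. \<Sum>j. kt \<tau> \<alpha> (n - i) *\<^sub>R (kt \<tau> (\<alpha> * real j + \<beta>) i *\<^sub>R blinfun_pow A j))"
    unfolding resolvent_series_def
    by (intro sum.cong refl suminf_scaleR_right summable_kt_scaleR_blinfun_pow assms)
  also have "\<dots> = (\<Sum>j. \<Sum>i\<le>n. kt \<tau> \<alpha> (n - i) *\<^sub>R (kt \<tau> (\<alpha> * real j + \<beta>) i *\<^sub>R blinfun_pow A j))"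
    by (intro suminf_sum[symmetric] summable_scaleR_right summable_kt_scaleR_blinfun_pow assms)
  also have "\<dots> = (\<Sum>j. (1 / \<tau>) *\<^sub>R (kt \<tau> (\<alpha> * real j + (\<alpha> + \<beta>)) n *\<^sub>R blinfun_pow A j))"
    by (simp add: scaleR_sum_left[symmetric] coefficient)
  also have "\<dots> = (1 / \<tau>) *\<^sub>R resolvent_series \<tau> \<alpha> (\<alpha> + \<beta>) A n"
    unfolding resolvent_series_def
    by (rule suminf_scaleR_right[OF summable_kt_scaleR_blinfun_pow, symmetric]) (use \<alpha> assms in simp)
  finally show ?thesis .
qed

lemma resolvent_series_equation:
  assumes "\<beta> > 0"
  shows "resolvent_series \<tau> \<alpha> \<beta> A n
    = kt \<tau> \<beta> n *\<^sub>R id_blinfun + \<tau> *\<^sub>R (A o\<^sub>L (\<Sum>i\<le>n. kt \<tau> \<alpha> (n - i) *\<^sub>R resolvent_series \<tau> \<alpha> \<beta> A i))"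
proof -
  have "\<tau> *\<^sub>R (A o\<^sub>L (\<Sum>i\<le>n. kt \<tau> \<alpha> (n - i) *\<^sub>R resolvent_series \<tau> \<alpha> \<beta> A i))
      = A o\<^sub>L resolvent_series \<tau> \<alpha> (\<alpha> + \<beta>) A n"
    using \<tau> by (simp add: resolvent_series_convolution[OF assms]
        blinfun_compose_scaleR_right)
  then show ?thesis
    using resolvent_series_split_head[OF assms] by simp
qed

end

lemma closed_operator_blinfun: "closed_operator UNIV (blinfun_apply A)"
proof -
  have "{(x, blinfun_apply A x) | x. x \<in> UNIV} = {p. snd p = blinfun_apply A (fst p)}"
    by auto
  moreover have "closed {p. snd p = blinfun_apply A (fst p)}"
    by (intro closed_Collect_eq continuous_intros)
  ultimately show ?thesis
    unfolding closed_operator_def by (simp add: blinfun.add_right blinfun.scaleR_right)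
qed

lemma discrete_resolvent_family_blinfun:
  fixes A :: "'a::real_normed_vector \<Rightarrow>\<^sub>L 'a" and S :: "nat \<Rightarrow> 'a \<Rightarrow>\<^sub>L 'a"
  assumes commute: "\<And>n. A o\<^sub>L S n = S n o\<^sub>L A"
    and equation: "\<And>n. S n = kt \<tau> \<beta> n *\<^sub>R id_blinfun + \<tau> *\<^sub>R (A o\<^sub>L (\<Sum>j\<le>n. kt \<tau> \<alpha> (n - j) *\<^sub>R S j))"
  shows "discrete_resolvent_family \<tau> \<alpha> \<beta> UNIV (blinfun_apply A) S"
proof -
  have "A (S n x) = S n (A x)" for n x
    using arg_cong[OF commute[of n], of "\<lambda>B. B x"] by simp
  moreover have "S n x = kt \<tau> \<beta> n *\<^sub>R x + \<tau> *\<^sub>R A (\<Sum>j\<le>n. kt \<tau> \<alpha> (n - j) *\<^sub>R S j x)" for n x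
    by (subst equation) (simp add: blinfun.add_left blinfun.scaleR_left blinfun.sum_left)
  ultimately show ?thesis
    unfolding discrete_resolvent_family_def using closed_operator_blinfun by blast
qed

theorem proposition3p12:
  fixes A :: "'a::banach \<Rightarrow>\<^sub>L 'a" and \<alpha> \<beta> \<tau> :: real
  assumes "\<alpha> > 0" and "\<beta> > 0" and "\<tau> > 0" and "\<tau> powr \<alpha> < 1"
    and "norm A < 1"
  shows "(\<forall>n. summable (\<lambda>j. kt \<tau> (\<alpha> * real j + \<beta>) n *\<^sub>R blinfun_pow A j))
    \<and> discrete_resolvent_family \<tau> \<alpha> \<beta> UNIV (blinfun_apply A)
        (\<lambda>n. \<Sum>j. kt \<tau> (\<alpha> * real j + \<beta>) n *\<^sub>R blinfun_pow A j)"
proof -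
  have "norm A \<le> 1" using assms(5) by simp
  note summable = summable_kt_scaleR_blinfun_pow[OF assms(1,3,4) this assms(2)]
    and equation = resolvent_series_equation[OF assms(1,3,4) \<open>norm A \<le> 1\<close> assms(2)]
  have "discrete_resolvent_family \<tau> \<alpha> \<beta> UNIV (blinfun_apply A) (resolvent_series \<tau> \<alpha> \<beta> A)"
  proof (rule discrete_resolvent_family_blinfun)
    show "A o\<^sub>L resolvent_series \<tau> \<alpha> \<beta> A n = resolvent_series \<tau> \<alpha> \<beta> A n o\<^sub>L A" for n
      unfolding resolvent_series_def by (rule blinfun_compose_suminf_pow_commute[OF summable])
  qed (rule equation)
  then show ?thesis
    using summable by (simp add: resolvent_series_def[abs_def])
qed

end
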